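(* Let $M$ be a smooth manifold with a symmetric (torsion-free) affine connection $\nabla$ and Riemann tensor $R_{abc}{}^d$. Then for all indices $$\nabla_{(a}\nabla_bR_{cd)e}{}^f = R_{(abc}{}^m R_{d)me}{}^f - R_{ace}{}^m R_{bdm}{}^f + R_{acm}{}^f R_{bde}{}^m .$$
   Context: Abstract index notation with Einstein summation is used. The connection has Christoffel symbols $\Gamma^c_{ab}=\Gamma^c_{ba}$, and the Riemann tensor is $R_{abc}{}^d = \partial_a \Gamma_{bc}^d - \partial_b\Gamma_{ac}^d - \Gamma_{ac}^k\Gamma_{bk}^d + \Gamma_{ak}^d \Gamma_{bc}^k$. The notation $(abcd)$ on a group of indices denotes the sum over the four cyclic permutations of $(a,b,c,d)$: e.g. $\nabla_{(a}\nabla_bR_{cd)e}{}^f=\nabla_a\nabla_bR_{cde}{}^f+\nabla_b\nabla_cR_{dae}{}^f+\nabla_c\nabla_dR_{abe}{}^f+\nabla_d\nabla_aR_{bce}{}^f$ and $R_{(abc}{}^m R_{d)me}{}^f = R_{abc}{}^m R_{dme}{}^f+R_{bcd}{}^m R_{ame}{}^f+R_{cda}{}^m R_{bme}{}^f+R_{dab}{}^m R_{cme}{}^f$. *)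

theory Defs
  imports "HOL-Analysis.Analysis"
begin

text \<open>Local coordinate setting: a chart domain U (open subset of R^n, n = CARD('n)),
  coordinates x :: real^'n.  A connection is given by its Christoffel symbols
  Gam c a b x = Gamma^c_{ab}(x).\<close>

definition partial :: "'n::finite \<Rightarrow> (real^'n \<Rightarrow> real) \<Rightarrow> real^'n \<Rightarrow> real" where
  "partial i f x = deriv (\<lambda>t. f (x + t *\<^sub>R axis i 1)) 0"

definition smooth_on :: "(real^'n::finite) set \<Rightarrow> (real^'n \<Rightarrow> real) \<Rightarrow> bool" where
  "smooth_on U f \<longleftrightarrow> (\<forall>is. foldr partial is f differentiable_on U)"

text \<open>Tensor fields with lower indices ls and upper indices us.\<close>
type_synonym 'n tensor = "'n list \<Rightarrow> 'n list \<Rightarrow> real^'n \<Rightarrow> real"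

text \<open>Covariant derivative: (nabla T) (a # ls) us = nabla_a T_{ls}^{us}.\<close>
definition nabla :: "('n::finite \<Rightarrow> 'n \<Rightarrow> 'n \<Rightarrow> real^'n \<Rightarrow> real) \<Rightarrow> 'n tensor \<Rightarrow> 'n tensor" where
  "nabla Gam T ls us x = (case ls of [] \<Rightarrow> 0 | a # ls' \<Rightarrow>
      partial a (T ls' us) x
      - (\<Sum>i<length ls'. \<Sum>k\<in>UNIV. Gam k a (ls' ! i) x * T (ls'[i := k]) us x)
      + (\<Sum>j<length us. \<Sum>k\<in>UNIV. Gam (us ! j) a k x * T ls' (us[j := k]) x))"

definition riem :: "('n::finite \<Rightarrow> 'n \<Rightarrow> 'n \<Rightarrow> real^'n \<Rightarrow> real) \<Rightarrow> 'n \<Rightarrow> 'n \<Rightarrow> 'n \<Rightarrow> 'n \<Rightarrow> real^'n \<Rightarrow> real" where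
  "riem Gam a b c d x = partial a (Gam d b c) x - partial b (Gam d a c) x
     - (\<Sum>k\<in>UNIV. Gam k a c x * Gam d b k x) + (\<Sum>k\<in>UNIV. Gam d a k x * Gam k b c x)"

definition riemT :: "('n::finite \<Rightarrow> 'n \<Rightarrow> 'n \<Rightarrow> real^'n \<Rightarrow> real) \<Rightarrow> 'n tensor" where
  "riemT Gam ls us x = riem Gam (ls ! 0) (ls ! 1) (ls ! 2) (us ! 0) x"

end

theory Submission
  imports Defs
begin

(* Algebraic half: summing the Ricci identity over the four cyclic shifts of (a,b,c,d)
   and the two "diagonal" pairs, and eliminating the second derivatives with the
   differentiated Bianchi identities, leaves twice the quadratic right-hand side.

   The theorem only assumes the Christoffel symbols symmetric on U; we replace them by
   their symmetrisation, which agrees on U, and use that everything is local in U. *)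

section \<open>Partial derivatives along coordinate axes\<close>

lemma has_derivative_along_line:
  fixes f :: "real^'n::finite \<Rightarrow> real"
  assumes "(f has_derivative f') (at (p + s *\<^sub>R v))"
  shows "((\<lambda>t. f (p + t *\<^sub>R v)) has_real_derivative f' v) (at s)"
proof -
  have "((\<lambda>t. p + t *\<^sub>R v) has_derivative (\<lambda>t. t *\<^sub>R v)) (at s)"
    by (auto intro!: derivative_eq_intros)
  from has_derivative_compose[OF this assms]
  have "((\<lambda>t. f (p + t *\<^sub>R v)) has_derivative (\<lambda>t. f' (t *\<^sub>R v))) (at s)" by simp
  moreover have "(\<lambda>t. f' (t *\<^sub>R v)) = (*) (f' v)"
    using has_derivative_linear[OF assms] by (auto simp: linear_scale mult.commute)
  ultimately show ?thesis by (simp add: has_field_derivative_def)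
qed

lemma partial_eq_derivative:
  fixes f :: "real^'n::finite \<Rightarrow> real"
  assumes "(f has_derivative f') (at y)"
  shows "partial i f y = f' (axis i 1)"
proof -
  have "((\<lambda>t. f (y + t *\<^sub>R axis i 1)) has_real_derivative f' (axis i 1)) (at 0)"
    using has_derivative_along_line[of f f' y 0] assms by simp
  then show ?thesis unfolding partial_def by (rule DERIV_imp_deriv)
qed

lemma partial_frechet:
  fixes f :: "real^'n::finite \<Rightarrow> real"
  assumes "f differentiable (at y)"
  shows "partial i f y = frechet_derivative f (at y) (axis i 1)"
  using partial_eq_derivative assms frechet_derivative_works by blast

lemma partial_line_derivative:
  fixes f :: "real^'n::finite \<Rightarrow> real"
  assumes "f differentiable (at (p + s *\<^sub>R axis k 1))"
  shows "((\<lambda>t. f (p + t *\<^sub>R axis k 1)) has_real_derivative partial k f (p + s *\<^sub>R axis k 1)) (at s)"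
  using has_derivative_along_line[of f _ p s "axis k 1"] assms
  by (simp add: partial_frechet frechet_derivative_works[symmetric])

lemma partial_local:
  fixes f g :: "real^'n::finite \<Rightarrow> real"
  assumes "open U" "y \<in> U" "\<And>z. z \<in> U \<Longrightarrow> f z = g z"
  shows "partial i f y = partial i g y"
proof -
  obtain e where e: "e > 0" "ball y e \<subseteq> U" using assms(1,2) open_contains_ball by blast
  have "eventually (\<lambda>t::real. dist t 0 < e) (nhds 0)"
    using e(1) eventually_nhds_metric by blast
  then have "eventually (\<lambda>t. f (y + t *\<^sub>R axis i 1) = g (y + t *\<^sub>R axis i 1)) (nhds 0)"
  proof (rule eventually_mono)
    fix t :: real assume "dist t 0 < e"
    then have "y + t *\<^sub>R axis i 1 \<in> ball y e" by (simp add: dist_norm)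
    then show "f (y + t *\<^sub>R axis i 1) = g (y + t *\<^sub>R axis i 1)" using e assms(3) by blast
  qed
  then show ?thesis unfolding partial_def by (rule deriv_cong_ev) simp
qed

lemma partial_const: "partial i (\<lambda>z. c) y = 0"
  unfolding partial_def by (simp add: DERIV_imp_deriv)

lemma partial_add:
  fixes f g :: "real^'n::finite \<Rightarrow> real"
  assumes "f differentiable (at y)" "g differentiable (at y)"
  shows "partial i (\<lambda>z. f z + g z) y = partial i f y + partial i g y"
proof -
  have "((\<lambda>z. f z + g z) has_derivative
      (\<lambda>h. frechet_derivative f (at y) h + frechet_derivative g (at y) h)) (at y)"
    using assms by (intro has_derivative_add) (simp_all add: frechet_derivative_works[symmetric])
  from partial_eq_derivative[OF this, of i] show ?thesis using assms by (simp add: partial_frechet)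
qed

lemma partial_diff:
  fixes f g :: "real^'n::finite \<Rightarrow> real"
  assumes "f differentiable (at y)" "g differentiable (at y)"
  shows "partial i (\<lambda>z. f z - g z) y = partial i f y - partial i g y"
proof -
  have "((\<lambda>z. f z - g z) has_derivative
      (\<lambda>h. frechet_derivative f (at y) h - frechet_derivative g (at y) h)) (at y)"
    using assms by (intro has_derivative_diff) (simp_all add: frechet_derivative_works[symmetric])
  from partial_eq_derivative[OF this, of i] show ?thesis using assms by (simp add: partial_frechet)
qed

lemma partial_uminus:
  fixes f :: "real^'n::finite \<Rightarrow> real"
  assumes "f differentiable (at y)"
  shows "partial i (\<lambda>z. - f z) y = - partial i f y"
proof -
  have "((\<lambda>z. - f z) has_derivative (\<lambda>h. - frechet_derivative f (at y) h)) (at y)"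
    using assms by (intro has_derivative_minus) (simp_all add: frechet_derivative_works[symmetric])
  from partial_eq_derivative[OF this, of i] show ?thesis using assms by (simp add: partial_frechet)
qed

lemma partial_mult:
  fixes f g :: "real^'n::finite \<Rightarrow> real"
  assumes "f differentiable (at y)" "g differentiable (at y)"
  shows "partial i (\<lambda>z. f z * g z) y = partial i f y * g y + f y * partial i g y"
proof -
  have "((\<lambda>z. f z * g z) has_derivative
      (\<lambda>h. f y * frechet_derivative g (at y) h + frechet_derivative f (at y) h * g y)) (at y)"
    using assms by (intro has_derivative_mult) (simp_all add: frechet_derivative_works[symmetric])
  from partial_eq_derivative[OF this, of i] show ?thesis using assms by (simp add: partial_frechet)
qed

lemma partial_sum:
  fixes f :: "'k \<Rightarrow> real^'n::finite \<Rightarrow> real"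
  assumes "\<And>k. k \<in> S \<Longrightarrow> f k differentiable (at y)"
  shows "partial i (\<lambda>z. \<Sum>k\<in>S. f k z) y = (\<Sum>k\<in>S. partial i (f k) y)"
proof -
  have "((\<lambda>z. \<Sum>k\<in>S. f k z) has_derivative (\<lambda>h. \<Sum>k\<in>S. frechet_derivative (f k) (at y) h)) (at y)"
    using assms by (intro has_derivative_sum) (simp_all add: frechet_derivative_works[symmetric])
  from partial_eq_derivative[OF this, of i] show ?thesis using assms by (simp add: partial_frechet)
qed

lemmas partial_rules = partial_const partial_add partial_diff partial_uminus partial_mult partial_sum

section \<open>Smooth functions\<close>

lemma smooth_partial: "smooth_on U f \<Longrightarrow> smooth_on U (partial i f)"
  unfolding smooth_on_def
proof
  fix "is" assume "\<forall>is. foldr partial is f differentiable_on U"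
  then have "foldr partial (is @ [i]) f differentiable_on U" by blast
  then show "foldr partial is (partial i f) differentiable_on U" by simp
qed

lemma smooth_differentiable_on: "smooth_on U f \<Longrightarrow> f differentiable_on U"
  unfolding smooth_on_def by (drule spec[of _ "[]"]) simp

lemma smooth_differentiable_at: "open U \<Longrightarrow> smooth_on U f \<Longrightarrow> y \<in> U \<Longrightarrow> f differentiable (at y)"
  using smooth_differentiable_on differentiable_on_eq_differentiable_at by blast

lemma differentiable_on_cong_open:
  fixes f g :: "real^'n::finite \<Rightarrow> real"
  assumes "open U" "\<And>y. y \<in> U \<Longrightarrow> f y = g y" "g differentiable_on U"
  shows "f differentiable_on U"
proof -
  have "f differentiable (at y)" if "y \<in> U" for y
  proof -
    have "g differentiable (at y)"
      using assms(1,3) that differentiable_on_eq_differentiable_at by blast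
    then obtain g' where "(g has_derivative g') (at y)" unfolding differentiable_def by blast
    then have "(f has_derivative g') (at y)"
      by (rule has_derivative_transform_within_open[OF _ assms(1) that]) (simp add: assms(2))
    then show ?thesis unfolding differentiable_def by blast
  qed
  then show ?thesis using assms(1) differentiable_on_eq_differentiable_at by blast
qed

text \<open>All closure properties of smoothness below are instances.\<close>
lemma smooth_on_closed_family:
  fixes F :: "(real^'n::finite \<Rightarrow> real) set"
  assumes U: "open U"
    and diff: "\<And>f. f \<in> F \<Longrightarrow> f differentiable_on U"
    and closed: "\<And>f i. f \<in> F \<Longrightarrow> \<exists>g\<in>F. \<forall>y\<in>U. partial i f y = g y"
    and f: "f \<in> F"
  shows "smooth_on U f"
proof -
  have iterated: "\<exists>g\<in>F. \<forall>y\<in>U. foldr partial is f y = g y" for "is"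
  proof (induction "is")
    case Nil then show ?case using f by auto
  next
    case (Cons i "is")
    then obtain g where g: "g \<in> F" "\<forall>y\<in>U. foldr partial is f y = g y" by blast
    obtain g' where g': "g' \<in> F" "\<forall>y\<in>U. partial i g y = g' y" using closed[OF g(1)] by blast
    have "\<forall>y\<in>U. foldr partial (i # is) f y = g' y"
      using partial_local[OF U _ , of _ "foldr partial is f" g] g g' by simp
    then show ?case using g' by blast
  qed
  show ?thesis unfolding smooth_on_def
  proof
    fix "is"
    obtain g where "g \<in> F" "\<forall>y\<in>U. foldr partial is f y = g y" using iterated by blast
    then show "foldr partial is f differentiable_on U"
      using differentiable_on_cong_open[OF U, of "foldr partial is f" g] diff by blast
  qed
qed

lemma smooth_const: "open U \<Longrightarrow> smooth_on U (\<lambda>y. c)"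
proof (rule smooth_on_closed_family[of U "range (\<lambda>c y. c)"])
  show "\<exists>g\<in>range (\<lambda>c y. c). \<forall>y\<in>U. partial i f y = g y" if "f \<in> range (\<lambda>c y. c)" for f i
    using that partial_const by auto
qed auto

lemma smooth_add:
  assumes U: "open U" and "smooth_on U f" "smooth_on U g"
  shows "smooth_on U (\<lambda>y. f y + g y)"
proof (rule smooth_on_closed_family[OF U,
    of "{h. \<exists>f g. smooth_on U f \<and> smooth_on U g \<and> h = (\<lambda>y. f y + g y)}"])
  let ?F = "{h. \<exists>f g. smooth_on U f \<and> smooth_on U g \<and> h = (\<lambda>y. f y + g y)}"
  show "h differentiable_on U" if "h \<in> ?F" for h
  proof -
    obtain f g where fg: "smooth_on U f" "smooth_on U g" "h = (\<lambda>y. f y + g y)"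
      using \<open>h \<in> ?F\<close> by blast
    show ?thesis unfolding fg(3)
      by (rule differentiable_on_add[OF smooth_differentiable_on[OF fg(1)] smooth_differentiable_on[OF fg(2)]])
  qed
  show "\<exists>g\<in>?F. \<forall>y\<in>U. partial i h y = g y" if "h \<in> ?F" for h i
  proof -
    obtain f g where fg: "smooth_on U f" "smooth_on U g" "h = (\<lambda>y. f y + g y)"
      using \<open>h \<in> ?F\<close> by blast
    have "\<forall>y\<in>U. partial i h y = partial i f y + partial i g y"
      using fg by (simp add: partial_add smooth_differentiable_at[OF U])
    moreover have "(\<lambda>y. partial i f y + partial i g y) \<in> ?F"
      using smooth_partial[OF fg(1)] smooth_partial[OF fg(2)] by blast
    ultimately show ?thesis by (intro bexI[where x="\<lambda>y. partial i f y + partial i g y"]) auto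
  qed
  show "(\<lambda>y. f y + g y) \<in> ?F" using assms(2,3) by blast
qed

text \<open>Finite sums of products of smooth functions; their partial derivatives are again
  of this form by the product rule, which yields closure of smoothness under products.\<close>
definition sum_of_products :: "((real^'n \<Rightarrow> real) \<times> (real^'n \<Rightarrow> real)) list \<Rightarrow> real^'n \<Rightarrow> real" where
  "sum_of_products L y = (\<Sum>p\<leftarrow>L. fst p y * snd p y)"

definition partial_products :: "'n \<Rightarrow> ((real^'n \<Rightarrow> real) \<times> (real^'n \<Rightarrow> real)) list
    \<Rightarrow> ((real^'n \<Rightarrow> real) \<times> (real^'n \<Rightarrow> real)) list" where
  "partial_products i L = concat (map (\<lambda>p. [(partial i (fst p), snd p), (fst p, partial i (snd p))]) L)"

lemma partial_sum_of_products:
  fixes L :: "((real^'n::finite \<Rightarrow> real) \<times> (real^'n \<Rightarrow> real)) list"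
  assumes U: "open U" and y: "y \<in> U" and L: "\<forall>p\<in>set L. smooth_on U (fst p) \<and> smooth_on U (snd p)"
  shows "sum_of_products L differentiable (at y) \<and>
    partial i (sum_of_products L) y = sum_of_products (partial_products i L) y"
  using L
proof (induction L)
  case Nil
  have "sum_of_products [] = (\<lambda>y. 0)" by (auto simp: sum_of_products_def)
  then show ?case by (simp add: partial_const sum_of_products_def partial_products_def)
next
  case (Cons p L)
  have split: "sum_of_products (p # L) = (\<lambda>z. fst p z * snd p z + sum_of_products L z)"
    by (auto simp: sum_of_products_def)
  have factors: "fst p differentiable (at y)" "snd p differentiable (at y)"
    using Cons.prems smooth_differentiable_at[OF U _ y] by auto
  then have product: "(\<lambda>z. fst p z * snd p z) differentiable (at y)"
    by (intro differentiable_mult)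
  have IH: "sum_of_products L differentiable (at y)"
    "partial i (sum_of_products L) y = sum_of_products (partial_products i L) y"
    using Cons by auto
  have "partial i (\<lambda>z. fst p z * snd p z + sum_of_products L z) y
      = partial i (fst p) y * snd p y + fst p y * partial i (snd p) y
        + sum_of_products (partial_products i L) y"
    by (simp only: partial_add[OF product IH(1)] partial_mult[OF factors] IH(2))
  then show ?case unfolding split
    by (intro conjI differentiable_add[OF product IH(1)]) (simp add: sum_of_products_def partial_products_def)
qed

lemma smooth_sum_of_products:
  assumes U: "open U" and L: "\<forall>p\<in>set L. smooth_on U (fst p) \<and> smooth_on U (snd p)"
  shows "smooth_on U (sum_of_products L)"
proof (rule smooth_on_closed_family[OF U, of "{h. \<exists>L. (\<forall>p\<in>set L. smooth_on U (fst p) \<and> smooth_on U (snd p))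
                    \<and> (\<forall>y\<in>U. h y = sum_of_products L y)}"])
  let ?F = "{h. \<exists>L. (\<forall>p\<in>set L. smooth_on U (fst p) \<and> smooth_on U (snd p))
                    \<and> (\<forall>y\<in>U. h y = sum_of_products L y)}"
  show "h differentiable_on U" if "h \<in> ?F" for h
  proof -
    obtain L where L: "\<forall>p\<in>set L. smooth_on U (fst p) \<and> smooth_on U (snd p)"
        "\<forall>y\<in>U. h y = sum_of_products L y"
      using \<open>h \<in> ?F\<close> by blast
    have "sum_of_products L differentiable_on U"
      by (simp add: differentiable_on_eq_differentiable_at[OF U] partial_sum_of_products[OF U _ L(1)])
    then show ?thesis using differentiable_on_cong_open[OF U, of h] L(2) by auto
  qed
  show "\<exists>g\<in>?F. \<forall>y\<in>U. partial i h y = g y" if "h \<in> ?F" for h i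
  proof -
    obtain L where L: "\<forall>p\<in>set L. smooth_on U (fst p) \<and> smooth_on U (snd p)"
        "\<forall>y\<in>U. h y = sum_of_products L y"
      using \<open>h \<in> ?F\<close> by blast
    have "\<forall>y\<in>U. partial i h y = sum_of_products (partial_products i L) y"
      using partial_local[OF U, of _ h "sum_of_products L"] L partial_sum_of_products[OF U _ L(1)]
      by simp
    moreover have "\<forall>p\<in>set (partial_products i L). smooth_on U (fst p) \<and> smooth_on U (snd p)"
      using L(1) by (auto simp: partial_products_def smooth_partial)
    ultimately show ?thesis by (intro bexI[where x="sum_of_products (partial_products i L)"]) auto
  qed
qed (use L in auto)

lemma smooth_mult:
  assumes U: "open U" and "smooth_on U f" "smooth_on U g"
  shows "smooth_on U (\<lambda>y. f y * g y)"
proof -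
  have "smooth_on U (sum_of_products [(f, g)])"
    using assms by (intro smooth_sum_of_products) auto
  moreover have "sum_of_products [(f, g)] = (\<lambda>y. f y * g y)"
    by (simp add: sum_of_products_def fun_eq_iff)
  ultimately show ?thesis by simp
qed

lemma smooth_uminus:
  assumes U: "open U" and "smooth_on U f"
  shows "smooth_on U (\<lambda>y. - f y)"
  using smooth_mult[OF U smooth_const[OF U, of "-1"] assms(2)] by simp

lemma smooth_diff:
  assumes U: "open U" and "smooth_on U f" "smooth_on U g"
  shows "smooth_on U (\<lambda>y. f y - g y)"
  using smooth_add[OF U assms(2) smooth_uminus[OF U assms(3)]] by simp

lemma smooth_sum:
  assumes U: "open U" and "finite S" "\<And>k. k \<in> S \<Longrightarrow> smooth_on U (f k)"
  shows "smooth_on U (\<lambda>y. \<Sum>k\<in>S. f k y)"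
  using assms(2,3)
  by (induction S rule: finite_induct) (simp_all add: smooth_const[OF U] smooth_add[OF U])

section \<open>Symmetry of second partial derivatives\<close>

definition second_difference :: "(real^'n \<Rightarrow> real) \<Rightarrow> 'n \<Rightarrow> 'n \<Rightarrow> real^'n \<Rightarrow> real \<Rightarrow> real" where
  "second_difference f i j x h = f (x + h *\<^sub>R axis j 1 + h *\<^sub>R axis i 1)
     - f (x + h *\<^sub>R axis i 1) - f (x + h *\<^sub>R axis j 1) + f x"

text \<open>The second difference is symmetric in i and j; this symmetry is what passes to
  the mixed partial derivatives in the limit.\<close>
lemma second_difference_commute: "second_difference f i j x h = second_difference f j i x h"
  unfolding second_difference_def by (simp add: algebra_simps)

lemma second_difference_mean_value:
  fixes f :: "real^'n::finite \<Rightarrow> real"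
  assumes U: "open U" and f: "smooth_on U f" and ball: "ball x r \<subseteq> U" and h: "0 < h" "2 * h < r"
  shows "\<exists>z. 0 < z \<and> z < h \<and> second_difference f i j x h
           = h * (partial i f (x + (h *\<^sub>R axis j 1 + z *\<^sub>R axis i 1)) - partial i f (x + z *\<^sub>R axis i 1))"
proof -
  define ei where "ei = (axis i 1 :: real^'n)"
  define ej where "ej = (axis j 1 :: real^'n)"
  have unit: "norm ei = 1" "norm ej = 1" unfolding ei_def ej_def by simp_all
  have in_U: "(x + h *\<^sub>R ej) + s *\<^sub>R ei \<in> U" "x + s *\<^sub>R ei \<in> U" if "0 \<le> s" "s \<le> h" for s
  proof -
    have "norm (h *\<^sub>R ej + s *\<^sub>R ei) \<le> h + s"
      using norm_triangle_ineq[of "h *\<^sub>R ej" "s *\<^sub>R ei"] unit h that by simp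
    moreover have "dist x ((x + h *\<^sub>R ej) + s *\<^sub>R ei) = norm (h *\<^sub>R ej + s *\<^sub>R ei)"
      by (metis add.assoc add_diff_cancel_left' dist_commute dist_norm)
    ultimately have "dist x ((x + h *\<^sub>R ej) + s *\<^sub>R ei) < r"
      using h that by simp
    then show "(x + h *\<^sub>R ej) + s *\<^sub>R ei \<in> U" using ball by auto
    have "dist x (x + s *\<^sub>R ei) < r" using h that unit by (simp add: dist_norm)
    then show "x + s *\<^sub>R ei \<in> U" using ball by auto
  qed
  define \<phi> where "\<phi> s = f ((x + h *\<^sub>R ej) + s *\<^sub>R ei) - f (x + s *\<^sub>R ei)" for s
  have "\<exists>z. 0 < z \<and> z < h \<and> \<phi> h - \<phi> 0
          = (h - 0) * (partial i f ((x + h *\<^sub>R ej) + z *\<^sub>R ei) - partial i f (x + z *\<^sub>R ei))"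
  proof (rule MVT2)
    fix s assume "0 \<le> s" "s \<le> h"
    then show "(\<phi> has_real_derivative
        partial i f ((x + h *\<^sub>R ej) + s *\<^sub>R ei) - partial i f (x + s *\<^sub>R ei)) (at s)"
      unfolding \<phi>_def ei_def
      using in_U[unfolded ei_def] smooth_differentiable_at[OF U f]
      by (intro DERIV_diff partial_line_derivative) auto
  qed (use h in simp)
  moreover have "\<phi> h - \<phi> 0 = second_difference f i j x h"
    unfolding \<phi>_def second_difference_def ei_def ej_def by simp
  ultimately show ?thesis unfolding ei_def ej_def by (simp add: add.assoc)
qed

text \<open>Young's estimate: as h tends to 0, the second difference is h^2 times the mixed
  partial derivative of f, up to o(h^2): the mean value theorem in direction i followed
  by the first-order expansion of the partial derivative in direction i at x.\<close>
lemma second_difference_estimate: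
  fixes f :: "real^'n::finite \<Rightarrow> real"
  assumes U: "open U" and x: "x \<in> U" and f: "smooth_on U f" and \<epsilon>: "\<epsilon> > 0"
  shows "\<exists>\<delta>>0. \<forall>h. 0 < h \<and> h < \<delta> \<longrightarrow>
     \<bar>second_difference f i j x h - h^2 * partial j (partial i f) x\<bar> \<le> 3 * \<epsilon> * h^2"
proof -
  define L where "L = frechet_derivative (partial i f) (at x)"
  obtain r where r: "r > 0" "ball x r \<subseteq> U" using U x open_contains_ball by blast
  have "partial i f differentiable (at x)"
    using smooth_differentiable_at[OF U smooth_partial[OF f] x] .
  then have L: "(partial i f has_derivative L) (at x)" "partial j (partial i f) x = L (axis j 1)"
    unfolding L_def using frechet_derivative_works partial_frechet by blast+
  then obtain d where d: "d > 0" "\<And>y. norm (y - x) < d \<Longrightarrow>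
      \<bar>partial i f y - partial i f x - L (y - x)\<bar> \<le> \<epsilon> * norm (y - x)"
    using \<epsilon> unfolding has_derivative_within_alt by fastforce
  show ?thesis
  proof (intro exI[of _ "min (r/2) (d/2)"] conjI allI impI)
    show "min (r/2) (d/2) > 0" using r d by simp
    fix h :: real assume h: "0 < h \<and> h < min (r/2) (d/2)"
    then obtain z where z: "0 < z" "z < h" and mvt0: "second_difference f i j x h
        = h * (partial i f (x + (h *\<^sub>R axis j 1 + z *\<^sub>R axis i 1)) - partial i f (x + z *\<^sub>R axis i 1))"
      using second_difference_mean_value[OF U f r(2), of h i j] by auto
    define v1 where "v1 = h *\<^sub>R axis j 1 + z *\<^sub>R axis i (1::real)"
    define v2 where "v2 = z *\<^sub>R axis i (1::real)"
    have mvt: "second_difference f i j x h = h * (partial i f (x + v1) - partial i f (x + v2))"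
      unfolding v1_def v2_def by (rule mvt0)
    have "norm v1 \<le> 2 * h"
      using norm_triangle_ineq[of "h *\<^sub>R axis j 1" "z *\<^sub>R axis i (1::real)"] h z unfolding v1_def by simp
    then have "\<bar>partial i f (x + v1) - partial i f x - L v1\<bar> \<le> \<epsilon> * (2 * h)"
      using d(2)[of "x + v1"] h \<epsilon> by (simp add: order_trans[OF _ mult_left_mono])
    moreover have "norm v2 \<le> h" using z unfolding v2_def by simp
    then have "\<bar>partial i f (x + v2) - partial i f x - L v2\<bar> \<le> \<epsilon> * h"
      using d(2)[of "x + v2"] h \<epsilon> by (simp add: order_trans[OF _ mult_left_mono])
    moreover have "L v1 - L v2 = h * L (axis j 1)"
      unfolding v1_def v2_def using has_derivative_linear[OF L(1)]
      by (simp add: linear_add linear_scale)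
    ultimately have bound: "\<bar>(partial i f (x + v1) - partial i f (x + v2)) - h * L (axis j 1)\<bar> \<le> 3 * \<epsilon> * h"
      by linarith
    have "second_difference f i j x h - h^2 * partial j (partial i f) x
        = h * ((partial i f (x + v1) - partial i f (x + v2)) - h * L (axis j 1))"
      by (simp add: mvt L(2) power2_eq_square algebra_simps)
    also have "\<bar>\<dots>\<bar> \<le> h * (3 * \<epsilon> * h)"
      using h bound by (simp add: abs_mult mult_left_mono)
    finally show "\<bar>second_difference f i j x h - h^2 * partial j (partial i f) x\<bar> \<le> 3 * \<epsilon> * h^2"
      by (simp add: power2_eq_square mult_ac)
  qed
qed

lemma partial_commute:
  fixes f :: "real^'n::finite \<Rightarrow> real"
  assumes U: "open U" and x: "x \<in> U" and f: "smooth_on U f"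
  shows "partial j (partial i f) x = partial i (partial j f) x"
proof (rule dense_eq0_I[THEN eq_iff_diff_eq_0[THEN iffD2]])
  fix e :: real assume "e > 0"
  then have \<epsilon>: "e / 6 > 0" by simp
  obtain d1 where d1: "d1 > 0" "\<And>h. 0 < h \<and> h < d1 \<Longrightarrow>
      \<bar>second_difference f i j x h - h^2 * partial j (partial i f) x\<bar> \<le> 3 * (e / 6) * h^2"
    using second_difference_estimate[OF U x f \<epsilon>, of i j] by blast
  obtain d2 where d2: "d2 > 0" "\<And>h. 0 < h \<and> h < d2 \<Longrightarrow>
      \<bar>second_difference f j i x h - h^2 * partial i (partial j f) x\<bar> \<le> 3 * (e / 6) * h^2"
    using second_difference_estimate[OF U x f \<epsilon>, of j i] by blast
  define h where "h = min d1 d2 / 2"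
  have h: "0 < h" "h < d1" "h < d2" using d1 d2 unfolding h_def by auto
  have "3 * (e / 6) * h^2 = (h^2 * e) / 2" by simp
  then have "\<bar>h^2 * partial j (partial i f) x - h^2 * partial i (partial j f) x\<bar> \<le> h^2 * e"
    using d1(2)[OF conjI[OF h(1,2)]] d2(2)[OF conjI[OF h(1,3)]] second_difference_commute[of f i j x h]
    unfolding abs_le_iff by linarith
  then have "h^2 * \<bar>partial j (partial i f) x - partial i (partial j f) x\<bar> \<le> h^2 * e"
    by (simp add: abs_mult right_diff_distrib[symmetric])
  then show "\<bar>partial j (partial i f) x - partial i (partial j f) x\<bar> \<le> e"
    using h by simp
qed

section \<open>Covariant derivatives of (3,1)-tensors in coordinates\<close>

text \<open>These are the instances of the general operator nabla needed
  here, see the lemmas nabla_riemT and nabla_nabla_riemT below.\<close>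
definition covd :: "('n::finite \<Rightarrow> 'n \<Rightarrow> 'n \<Rightarrow> real^'n \<Rightarrow> real) \<Rightarrow> ('n \<Rightarrow> 'n \<Rightarrow> 'n \<Rightarrow> 'n \<Rightarrow> real^'n \<Rightarrow> real)
   \<Rightarrow> 'n \<Rightarrow> 'n \<Rightarrow> 'n \<Rightarrow> 'n \<Rightarrow> 'n \<Rightarrow> real^'n \<Rightarrow> real" where
  "covd Gam t b c d e f y = partial b (t c d e f) y - (\<Sum>k\<in>UNIV. Gam k b c y * t k d e f y)
     - (\<Sum>k\<in>UNIV. Gam k b d y * t c k e f y) - (\<Sum>k\<in>UNIV. Gam k b e y * t c d k f y)
     + (\<Sum>k\<in>UNIV. Gam f b k y * t c d e k y)"

definition covd2 :: "('n::finite \<Rightarrow> 'n \<Rightarrow> 'n \<Rightarrow> real^'n \<Rightarrow> real) \<Rightarrow> ('n \<Rightarrow> 'n \<Rightarrow> 'n \<Rightarrow> 'n \<Rightarrow> real^'n \<Rightarrow> real)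
   \<Rightarrow> 'n \<Rightarrow> 'n \<Rightarrow> 'n \<Rightarrow> 'n \<Rightarrow> 'n \<Rightarrow> 'n \<Rightarrow> real^'n \<Rightarrow> real" where
  "covd2 Gam t a b c d e f y = partial a (covd Gam t b c d e f) y
     - (\<Sum>k\<in>UNIV. Gam k a b y * covd Gam t k c d e f y) - (\<Sum>k\<in>UNIV. Gam k a c y * covd Gam t b k d e f y)
     - (\<Sum>k\<in>UNIV. Gam k a d y * covd Gam t b c k e f y) - (\<Sum>k\<in>UNIV. Gam k a e y * covd Gam t b c d k f y)
     + (\<Sum>k\<in>UNIV. Gam f a k y * covd Gam t b c d e k y)"

lemma covd_fun: "covd Gam t b c d e f = (\<lambda>y. partial b (t c d e f) y - (\<Sum>k\<in>UNIV. Gam k b c y * t k d e f y)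
     - (\<Sum>k\<in>UNIV. Gam k b d y * t c k e f y) - (\<Sum>k\<in>UNIV. Gam k b e y * t c d k f y)
     + (\<Sum>k\<in>UNIV. Gam f b k y * t c d e k y))"
  by (rule ext) (simp add: covd_def)

lemma riem_fun: "riem Gam a b c d = (\<lambda>y. partial a (Gam d b c) y - partial b (Gam d a c) y
     - (\<Sum>k\<in>UNIV. Gam k a c y * Gam d b k y) + (\<Sum>k\<in>UNIV. Gam d a k y * Gam k b c y))"
  by (rule ext) (simp add: riem_def)

definition ricci_comm :: "('n::finite \<Rightarrow> 'n \<Rightarrow> 'n \<Rightarrow> 'n \<Rightarrow> real) \<Rightarrow> ('n \<Rightarrow> 'n \<Rightarrow> 'n \<Rightarrow> 'n \<Rightarrow> real)
   \<Rightarrow> 'n \<Rightarrow> 'n \<Rightarrow> 'n \<Rightarrow> 'n \<Rightarrow> 'n \<Rightarrow> 'n \<Rightarrow> real" where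
  "ricci_comm r t a b c d e f =
     - (\<Sum>m\<in>UNIV. r a b c m * t m d e f) - (\<Sum>m\<in>UNIV. r a b d m * t c m e f)
     - (\<Sum>m\<in>UNIV. r a b e m * t c d m f) + (\<Sum>m\<in>UNIV. r a b m f * t c d e m)"

text \<open>A double sum of an antisymmetric array vanishes; this is how all terms that are
  quadratic in the Christoffel symbols cancel.\<close>
lemma double_sum_antisymmetric:
  fixes W :: "'a::finite \<Rightarrow> 'a \<Rightarrow> real"
  assumes "\<And>k l. W k l + W l k = 0"
  shows "(\<Sum>k\<in>UNIV. \<Sum>l\<in>UNIV. W k l) = 0"
proof -
  have "2 * (\<Sum>k\<in>UNIV. \<Sum>l\<in>UNIV. W k l) = (\<Sum>k\<in>UNIV. \<Sum>l\<in>UNIV. W k l) + (\<Sum>k\<in>UNIV. \<Sum>l\<in>UNIV. W l k)"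
    using sum.swap[of W UNIV UNIV] by simp
  also have "\<dots> = (\<Sum>k\<in>UNIV. \<Sum>l\<in>UNIV. W k l + W l k)"
    by (simp add: sum.distrib)
  also have "\<dots> = 0" using assms by simp
  finally show ?thesis by simp
qed

section \<open>Identities for a smooth symmetric connection\<close>

locale symmetric_connection =
  fixes U :: "(real^'n::finite) set" and Gam :: "'n \<Rightarrow> 'n \<Rightarrow> 'n \<Rightarrow> real^'n \<Rightarrow> real"
  assumes U: "open U" and smooth_christoffel: "\<And>c a b. smooth_on U (Gam c a b)"
    and christoffel_sym: "\<And>c a b. Gam c a b = Gam c b a"
begin

lemmas smooth_rules[simp] = smooth_christoffel smooth_add[OF U] smooth_diff[OF U] smooth_mult[OF U]
  smooth_uminus[OF U] smooth_sum[OF U finite] smooth_partial smooth_differentiable_at[OF U]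

abbreviation "DR \<equiv> covd Gam (riem Gam)"
abbreviation "DDR \<equiv> covd2 Gam (riem Gam)"

lemma smooth_riem[simp]: "smooth_on U (riem Gam a b c d)"
  unfolding riem_fun by simp

lemma smooth_covd_riem[simp]: "smooth_on U (DR b c d e f)"
  unfolding covd_fun by simp

lemma partial_commute_christoffel:
  "y \<in> U \<Longrightarrow> partial i (partial j (Gam c a b)) y = partial j (partial i (Gam c a b)) y"
  by (rule partial_commute[OF U _ smooth_christoffel])

text \<open>After expanding both sides,
  the second partials of t cancel by Schwarz, and the remaining terms quadratic in the
  Christoffel symbols form an antisymmetric double sum.\<close>
lemma ricci_identity:
  assumes y: "y \<in> U" and t: "\<And>c d e f. smooth_on U (t c d e f)"
  shows "covd2 Gam t a b c d e f y - covd2 Gam t b a c d e f y =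
    ricci_comm (\<lambda>p q s u. riem Gam p q s u y) (\<lambda>p q s u. t p q s u y) a b c d e f"
proof -
  have "partial a (partial b (t c d e f)) y = partial b (partial a (t c d e f)) y"
    by (rule partial_commute[OF U y t])
  then show ?thesis
    unfolding covd2_def covd_fun riem_def ricci_comm_def
    apply (simp add: partial_rules y t)
    apply (simp add: sum_distrib_left sum_distrib_right sum.distrib sum_subtractf algebra_simps christoffel_sym)
    apply (subst eq_iff_diff_eq_0)
    apply (simp only: sum.distrib[symmetric] sum_subtractf[symmetric])
    apply (rule double_sum_antisymmetric)
    apply (simp add: algebra_simps christoffel_sym)
    done
qed

lemma ricci_identity_riem:
  "x \<in> U \<Longrightarrow> DDR a b c d e f x - DDR b a c d e f x =
     ricci_comm (\<lambda>p q s u. riem Gam p q s u x) (\<lambda>p q s u. riem Gam p q s u x) a b c d e f"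
  by (rule ricci_identity) simp_all

lemma riem_antisym: "riem Gam b a c d y = - riem Gam a b c d y"
  by (simp add: riem_def algebra_simps)

lemma first_bianchi: "riem Gam a b c d y + riem Gam b c a d y + riem Gam c a b d y = 0"
  unfolding riem_def by (simp add: algebra_simps christoffel_sym)

lemma second_bianchi:
  assumes y: "y \<in> U"
  shows "DR a b c e f y + DR b c a e f y + DR c a b e f y = 0"
  unfolding covd_def riem_fun
  apply (simp add: partial_rules y)
  apply (simp add: partial_commute_christoffel[OF y] sum_distrib_left sum_distrib_right sum.distrib
      sum_subtractf algebra_simps christoffel_sym)
  apply (subst eq_iff_diff_eq_0)
  apply (simp only: sum.distrib[symmetric] sum_subtractf[symmetric])
  apply (rule double_sum_antisymmetric)
  apply (simp add: algebra_simps christoffel_sym)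
  done

lemma covd_riem_antisym:
  assumes y: "y \<in> U"
  shows "DR p r q e f y + DR p q r e f y = 0"
  unfolding covd_def riem_fun
  apply (simp add: partial_rules y)
  apply (simp add: partial_commute_christoffel[OF y] sum_distrib_left sum_distrib_right sum.distrib
      sum_subtractf algebra_simps christoffel_sym)
  done

text \<open>Differentiating the two previous identities once more: if a combination of \<nabla>R
  vanishes on U, so does its derivative, and the Christoffel terms are sums of such
  combinations.\<close>
lemma covd2_riem_antisym:
  assumes x: "x \<in> U"
  shows "DDR a b d c e f x + DDR a b c d e f x = 0"
proof -
  have "partial a (DR b d c e f) x + partial a (DR b c d e f) x
      = partial a (\<lambda>y. DR b d c e f y + DR b c d e f y) x"
    by (simp add: partial_rules x)
  also have "\<dots> = partial a (\<lambda>y. 0) x"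
    by (rule partial_local[OF U x]) (simp add: covd_riem_antisym)
  finally have derivative: "partial a (DR b d c e f) x + partial a (DR b c d e f) x = 0"
    by (simp add: partial_const)
  have "DDR a b d c e f x + DDR a b c d e f x =
     (partial a (DR b d c e f) x + partial a (DR b c d e f) x)
     - (\<Sum>k\<in>UNIV. Gam k a b x * (DR k d c e f x + DR k c d e f x)
          + Gam k a d x * (DR b k c e f x + DR b c k e f x)
          + Gam k a c x * (DR b d k e f x + DR b k d e f x)
          + Gam k a e x * (DR b d c k f x + DR b c d k f x))
     + (\<Sum>k\<in>UNIV. Gam f a k x * (DR b d c e k x + DR b c d e k x))"
    unfolding covd2_def by (simp add: algebra_simps sum.distrib sum_subtractf)
  also have "\<dots> = 0" using derivative by (simp add: covd_riem_antisym[OF x])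
  finally show ?thesis .
qed

lemma covd2_second_bianchi:
  assumes x: "x \<in> U"
  shows "DDR a b c d e f x + DDR a c d b e f x + DDR a d b c e f x = 0"
proof -
  have "partial a (DR b c d e f) x + partial a (DR c d b e f) x + partial a (DR d b c e f) x
      = partial a (\<lambda>y. DR b c d e f y + DR c d b e f y + DR d b c e f y) x"
    by (simp add: partial_rules x)
  also have "\<dots> = partial a (\<lambda>y. 0) x"
    by (rule partial_local[OF U x]) (simp add: second_bianchi)
  finally have derivative:
    "partial a (DR b c d e f) x + partial a (DR c d b e f) x + partial a (DR d b c e f) x = 0"
    by (simp add: partial_const)
  have "DDR a b c d e f x + DDR a c d b e f x + DDR a d b c e f x =
     (partial a (DR b c d e f) x + partial a (DR c d b e f) x + partial a (DR d b c e f) x)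
     - (\<Sum>k\<in>UNIV. Gam k a b x * (DR k c d e f x + DR c d k e f x + DR d k c e f x)
          + Gam k a c x * (DR k d b e f x + DR d b k e f x + DR b k d e f x)
          + Gam k a d x * (DR k b c e f x + DR b c k e f x + DR c k b e f x)
          + Gam k a e x * (DR b c d k f x + DR c d b k f x + DR d b c k f x))
     + (\<Sum>k\<in>UNIV. Gam f a k x * (DR b c d e k x + DR c d b e k x + DR d b c e k x))"
    unfolding covd2_def by (simp add: algebra_simps sum.distrib sum_subtractf)
  also have "\<dots> = 0" using derivative by (simp add: second_bianchi[OF x])
  finally show ?thesis .
qed

end

section \<open>The algebraic identity\<close>

definition quadratic_rhs :: "('n::finite \<Rightarrow> 'n \<Rightarrow> 'n \<Rightarrow> 'n \<Rightarrow> real) \<Rightarrow> 'n \<Rightarrow> 'n \<Rightarrow> 'n \<Rightarrow> 'n \<Rightarrow> 'n \<Rightarrow> 'n \<Rightarrow> real" where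
  "quadratic_rhs r a b c d e f =
     (\<Sum>m\<in>UNIV. r a b c m * r d m e f + r b c d m * r a m e f + r c d a m * r b m e f + r d a b m * r c m e f)
     - (\<Sum>m\<in>UNIV. r a c e m * r b d m f) + (\<Sum>m\<in>UNIV. r a c m f * r b d e m)"

text \<open>The proof is a
  termwise cancellation in the summation index m, after rewriting every component into
  a normal form with antisymmetry and the first Bianchi identity.\<close>
lemma ricci_comm_cyclic_combination:
  fixes r :: "'n::finite \<Rightarrow> 'n \<Rightarrow> 'n \<Rightarrow> 'n \<Rightarrow> real"
  assumes anti: "\<And>p q s t. r q p s t = - r p q s t"
    and bianchi: "\<And>p q s t. r p q s t + r q s p t + r s p q t = 0"
  shows "ricci_comm r r a b c d e f + ricci_comm r r b c d a e f + ricci_comm r r c d a b e f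
       + ricci_comm r r d a b c e f - ricci_comm r r a c d b e f - ricci_comm r r b d a c e f
     = 2 * quadratic_rhs r a b c d e f"
proof -
  have bianchi': "r q s p t = r p s q t - r p q s t" for p q s t
    using bianchi[of p q s t] anti[of p s q t] by linarith
  show ?thesis
    unfolding ricci_comm_def quadratic_rhs_def
    apply (subst eq_iff_diff_eq_0)
    apply (simp only: sum_distrib_left sum_negf[symmetric] sum.distrib[symmetric] sum_subtractf[symmetric])
    apply (rule sum.neutral)
    apply (rule ballI)
    subgoal for m
      by (simp add: anti[where p=a and q=b] anti[where p=a and q=c] anti[where p=a and q=d]
          anti[where p=b and q=c] anti[where p=b and q=d] anti[where p=c and q=d]
          anti[where p=m and q=a] anti[where p=m and q=b] anti[where p=m and q=c] anti[where p=m and q=d]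
          bianchi'[where p=a and q=b and s=c] bianchi'[where p=a and q=b and s=d]
          bianchi'[where p=a and q=c and s=d] bianchi'[where p=b and q=c and s=d] algebra_simps)
    done
qed

context symmetric_connection
begin

text \<open>The theorem for a globally symmetric connection: combine six instances of the
  Ricci identity with the differentiated Bianchi identities, which eliminate all second
  covariant derivatives except the four cyclic ones.\<close>
lemma cyclic_second_covd_riem:
  assumes x: "x \<in> U"
  shows "DDR a b c d e f x + DDR b c d a e f x + DDR c d a b e f x + DDR d a b c e f x
       = quadratic_rhs (\<lambda>p q s u. riem Gam p q s u x) a b c d e f"
proof -
  let ?R = "\<lambda>p q s u. riem Gam p q s u x"
  have "ricci_comm ?R ?R a b c d e f + ricci_comm ?R ?R b c d a e f + ricci_comm ?R ?R c d a b e f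
       + ricci_comm ?R ?R d a b c e f - ricci_comm ?R ?R a c d b e f - ricci_comm ?R ?R b d a c e f
     = 2 * quadratic_rhs ?R a b c d e f"
    by (rule ricci_comm_cyclic_combination[OF riem_antisym first_bianchi])
  then show ?thesis
    using ricci_identity_riem[OF x, of a b c d e f] ricci_identity_riem[OF x, of b c d a e f]
      ricci_identity_riem[OF x, of c d a b e f] ricci_identity_riem[OF x, of d a b c e f]
      ricci_identity_riem[OF x, of a c d b e f] ricci_identity_riem[OF x, of b d a c e f]
      covd2_second_bianchi[OF x, of a b c d e f] covd2_second_bianchi[OF x, of b c d a e f]
      covd2_second_bianchi[OF x, of c d a b e f] covd2_second_bianchi[OF x, of d a b c e f]
      covd2_riem_antisym[OF x, of c a b d e f] covd2_riem_antisym[OF x, of d b c a e f]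
    by linarith
qed

end

lemma riemT_eq: "riemT Gam [c, d, e] [f] = riem Gam c d e f"
  by (rule ext) (simp add: riemT_def)

lemma nabla_riemT: "nabla Gam (riemT Gam) [b, c, d, e] [f] = covd Gam (riem Gam) b c d e f"
  by (rule ext) (simp add: nabla_def covd_def riemT_eq riemT_def eval_nat_numeral algebra_simps)

lemma nabla_nabla_riemT:
  "nabla Gam (nabla Gam (riemT Gam)) [a, b, c, d, e] [f] y = covd2 Gam (riem Gam) a b c d e f y"
  by (simp add: nabla_def[of Gam "nabla Gam (riemT Gam)"] nabla_riemT covd2_def eval_nat_numeral algebra_simps)

lemma riem_local:
  assumes U: "open U" and eq: "\<And>c a b y. y \<in> U \<Longrightarrow> G1 c a b y = G2 c a b y" and y: "y \<in> U"
  shows "riem G1 a b c d y = riem G2 a b c d y"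
proof -
  have "partial i (G1 p q r) y = partial i (G2 p q r) y" for i p q r
    by (rule partial_local[OF U y]) (simp add: eq)
  then show ?thesis unfolding riem_def using eq[OF y] by simp
qed

lemma nabla_local:
  assumes U: "open U" and eq: "\<And>c a b y. y \<in> U \<Longrightarrow> G1 c a b y = G2 c a b y"
    and teq: "\<And>ls us y. y \<in> U \<Longrightarrow> T1 ls us y = T2 ls us y" and y: "y \<in> U"
  shows "nabla G1 T1 ls us y = nabla G2 T2 ls us y"
proof (cases ls)
  case Nil then show ?thesis by (simp add: nabla_def)
next
  case (Cons a ls')
  have "partial a (T1 ls' us) y = partial a (T2 ls' us) y"
    by (rule partial_local[OF U y]) (simp add: teq)
  then show ?thesis unfolding nabla_def Cons using eq[OF y] teq[OF y] by simp
qed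

definition symmetrise :: "('n \<Rightarrow> 'n \<Rightarrow> 'n \<Rightarrow> real^'n \<Rightarrow> real) \<Rightarrow> 'n \<Rightarrow> 'n \<Rightarrow> 'n \<Rightarrow> real^'n \<Rightarrow> real" where
  "symmetrise Gam c a b y = (Gam c a b y + Gam c b a y) / 2"

lemma symmetric_connection_symmetrise:
  fixes Gam :: "'n::finite \<Rightarrow> 'n \<Rightarrow> 'n \<Rightarrow> real^'n \<Rightarrow> real"
  assumes U: "open U" and smooth: "\<And>c a b. smooth_on U (Gam c a b)"
  shows "symmetric_connection U (symmetrise Gam)"
proof
  show "smooth_on U (symmetrise Gam c a b)" for c a b
  proof -
    have "smooth_on U (\<lambda>y. (\<lambda>_. 1/2) y * (Gam c a b y + Gam c b a y))"
      by (intro smooth_mult[OF U] smooth_const[OF U] smooth_add[OF U] smooth)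
    then show ?thesis by (simp add: symmetrise_def[abs_def] mult.commute)
  qed
  show "symmetrise Gam c a b = symmetrise Gam c b a" for c a b
    by (rule ext) (simp add: symmetrise_def add.commute)
qed (rule U)

lemma symmetrise_eq:
  assumes "Gam c a b y = Gam c b a y"
  shows "Gam c a b y = symmetrise Gam c a b y"
  using assms by (simp add: symmetrise_def)

theorem mainTheorem1:
  fixes Gam :: "'n::finite \<Rightarrow> 'n \<Rightarrow> 'n \<Rightarrow> real^'n \<Rightarrow> real"
    and U :: "(real^'n) set"
  assumes "open U"
    and "\<And>c a b. smooth_on U (Gam c a b)"
    and "\<And>c a b x. x \<in> U \<Longrightarrow> Gam c a b x = Gam c b a x"
    and "x \<in> U"
  shows "nabla Gam (nabla Gam (riemT Gam)) [a, b, c, d, e] [f] x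
       + nabla Gam (nabla Gam (riemT Gam)) [b, c, d, a, e] [f] x
       + nabla Gam (nabla Gam (riemT Gam)) [c, d, a, b, e] [f] x
       + nabla Gam (nabla Gam (riemT Gam)) [d, a, b, c, e] [f] x
     = (\<Sum>m\<in>UNIV. riem Gam a b c m x * riem Gam d m e f x
          + riem Gam b c d m x * riem Gam a m e f x
          + riem Gam c d a m x * riem Gam b m e f x
          + riem Gam d a b m x * riem Gam c m e f x)
       - (\<Sum>m\<in>UNIV. riem Gam a c e m x * riem Gam b d m f x)
       + (\<Sum>m\<in>UNIV. riem Gam a c m f x * riem Gam b d e m x)"
proof -
  note U = assms(1) and x = assms(4)
  let ?Gs = "symmetrise Gam"
  have agree: "Gam c a b y = ?Gs c a b y" if "y \<in> U" for c a b y
    using symmetrise_eq assms(3)[OF that] by blast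
  have riem_eq: "riem Gam p q r s y = riem ?Gs p q r s y" if "y \<in> U" for p q r s y
    by (rule riem_local[OF U agree that])
  have nabla_eq: "nabla Gam (riemT Gam) ls us y = nabla ?Gs (riemT ?Gs) ls us y" if "y \<in> U" for ls us y
    by (rule nabla_local[OF U agree _ that]) (simp_all add: riemT_def riem_eq)
  have nabla2_eq:
    "nabla Gam (nabla Gam (riemT Gam)) ls us x = nabla ?Gs (nabla ?Gs (riemT ?Gs)) ls us x" for ls us
    by (rule nabla_local[OF U agree nabla_eq x])
  show ?thesis
    unfolding nabla2_eq riem_eq[OF x] unfolding nabla_nabla_riemT
    using symmetric_connection.cyclic_second_covd_riem[OF symmetric_connection_symmetrise[of U Gam, OF U assms(2)] x]
    by (simp add: quadratic_rhs_def)
qed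

end
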